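(* Let $\Delta$ be the root system of a simple complex Lie algebra, with positive roots $\Delta^+$, simple roots $\Pi$ and highest root $\theta$. Let $\alpha\in\Pi$ be such that $\mathrm{ht}_\alpha(\theta)=2d_\alpha+1$ is odd. Then $\bigcup_{j\ge d_\alpha+1}\Delta_\alpha(j)$ is a maximal abelian (upper) ideal of $\Delta^+$ (equivalently, $\bigoplus_{j\ge d_\alpha+1}\mathfrak g_\alpha(j)$ is a maximal abelian ideal of the Borel subalgebra).
   Context: For $\mu=\sum_{\beta\in\Pi}c_\beta\beta$, $\mathrm{ht}_\alpha(\mu)=c_\alpha$; $\Delta_\alpha(i)=\{\gamma\in\Delta\mid\mathrm{ht}_\alpha(\gamma)=i\}$ and $\mathfrak g_\alpha(i)$ is the corresponding sum of root spaces. An upper ideal of $\Delta^+$ is a subset $I\subset\Delta^+$ with $\gamma\in I,\nu\in\Delta^+,\nu+\gamma\in\Delta^+\Rightarrow\nu+\gamma\in I$; it is abelian if $\gamma'+\gamma''\notin\Delta^+$ for all $\gamma',\gamma''\in I$; maximality is with respect to inclusion among abelian upper ideals. *)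

theory Defs
  imports "HOL-Analysis.Analysis"
begin

definition reflect :: "'a::real_inner \<Rightarrow> 'a \<Rightarrow> 'a" where
  "reflect a v = v - ((2 * (v \<bullet> a)) / (a \<bullet> a)) *\<^sub>R a"

definition root_system :: "'a::euclidean_space set \<Rightarrow> bool" where
  "root_system R \<longleftrightarrow> finite R \<and> 0 \<notin> R \<and> span R = UNIV \<and>
     (\<forall>a\<in>R. \<forall>b\<in>R. reflect a b \<in> R) \<and>
     (\<forall>a\<in>R. \<forall>b\<in>R. 2 * (b \<bullet> a) / (a \<bullet> a) \<in> \<int>) \<and>
     (\<forall>a\<in>R. \<forall>c::real. c *\<^sub>R a \<in> R \<longrightarrow> c = 1 \<or> c = -1)"

definition irreducible_rs :: "'a::euclidean_space set \<Rightarrow> bool" where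
  "irreducible_rs R \<longleftrightarrow> R \<noteq> {} \<and> \<not> (\<exists>A B. A \<noteq> {} \<and> B \<noteq> {} \<and> A \<union> B = R \<and> A \<inter> B = {} \<and>
       (\<forall>a\<in>A. \<forall>b\<in>B. a \<bullet> b = 0))"

definition ht :: "'a::euclidean_space set \<Rightarrow> 'a \<Rightarrow> 'a \<Rightarrow> real" where
  "ht S a mu = representation S mu a"

definition is_base :: "'a::euclidean_space set \<Rightarrow> 'a set \<Rightarrow> bool" where
  "is_base R S \<longleftrightarrow> S \<subseteq> R \<and> independent S \<and> R \<subseteq> span S \<and>
     (\<forall>g\<in>R. (\<forall>b\<in>S. ht S b g \<in> \<int>) \<and>
             ((\<forall>b\<in>S. ht S b g \<ge> 0) \<or> (\<forall>b\<in>S. ht S b g \<le> 0)))"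

definition pos_roots :: "'a::euclidean_space set \<Rightarrow> 'a set \<Rightarrow> 'a set" where
  "pos_roots R S = {g\<in>R. \<forall>b\<in>S. ht S b g \<ge> 0}"

definition highest_root :: "'a::euclidean_space set \<Rightarrow> 'a set \<Rightarrow> 'a \<Rightarrow> bool" where
  "highest_root R S t \<longleftrightarrow> t \<in> R \<and> (\<forall>g\<in>R. \<forall>b\<in>S. ht S b g \<le> ht S b t)"

definition upper_ideal :: "'a::euclidean_space set \<Rightarrow> 'a set \<Rightarrow> 'a set \<Rightarrow> bool" where
  "upper_ideal R S I \<longleftrightarrow> I \<subseteq> pos_roots R S \<and>
     (\<forall>g\<in>I. \<forall>v\<in>pos_roots R S. v + g \<in> pos_roots R S \<longrightarrow> v + g \<in> I)"

definition abelian_set :: "'a::euclidean_space set \<Rightarrow> 'a set \<Rightarrow> 'a set \<Rightarrow> bool" where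
  "abelian_set R S I \<longleftrightarrow> (\<forall>g1\<in>I. \<forall>g2\<in>I. g1 + g2 \<notin> pos_roots R S)"

definition maximal_abelian_ideal :: "'a::euclidean_space set \<Rightarrow> 'a set \<Rightarrow> 'a set \<Rightarrow> bool" where
  "maximal_abelian_ideal R S I \<longleftrightarrow> upper_ideal R S I \<and> abelian_set R S I \<and>
     (\<forall>J. upper_ideal R S J \<and> abelian_set R S J \<and> I \<subseteq> J \<longrightarrow> J = I)"

end

theory Submission
  imports Defs
begin

text \<open>
  The roots of \<open>\<alpha>\<close>-level at least \<open>d + 1\<close> form an upper ideal, and it is abelian because
  a sum of two of them would have \<open>\<alpha>\<close>-level at least \<open>2d + 2 > ht\<^sub>\<alpha>(\<theta>)\<close>.
  For maximality let \<open>J\<close> be a larger abelian ideal and \<open>\<gamma> \<in> J\<close>.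
  The sum of all roots of \<open>\<alpha>\<close>-level \<open>2d + 1\<close> is fixed by the reflections in the simple roots
  \<open>\<beta> \<noteq> \<alpha>\<close>, so it is a positive multiple of the fundamental weight of \<open>\<alpha>\<close>. Hence, if
  \<open>0 < ht\<^sub>\<alpha>(\<gamma>) \<le> d\<close>, some root \<open>v\<close> of level \<open>2d + 1\<close> has \<open>(v, \<gamma>) > 0\<close>, and \<open>v - \<gamma>\<close> is a root
  of level \<open>\<ge> d + 1\<close>, so it lies in \<open>J\<close> and \<open>\<gamma> + (v - \<gamma>) = v\<close> contradicts abelianness.
  If \<open>ht\<^sub>\<alpha>(\<gamma>) = 0\<close>, take such a \<open>\<gamma>\<close> of maximal height: it is dominant for the simple roots
  \<open>\<beta> \<noteq> \<alpha>\<close>. If also \<open>(\<gamma>, \<alpha>) \<ge> 0\<close>, then \<open>(\<gamma>, \<theta>) > 0\<close> and \<open>\<theta> - \<gamma>\<close> gives the same contradiction;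
  otherwise \<open>\<gamma> + \<alpha> \<in> J\<close> has level \<open>1\<close>, which forces \<open>d = 0\<close>, and then \<open>\<alpha> \<in> J\<close> is the
  offending partner of \<open>\<gamma>\<close>.
\<close>

lemma reflect_self: "reflect a a = - a"
  unfolding reflect_def by (cases "a = 0") (simp_all add: scaleR_2)

lemma linear_reflect: "linear (reflect b)"
  by (rule linearI)
    (simp_all add: reflect_def inner_add_left add_divide_distrib scaleR_add_left algebra_simps)

lemma reflect_reflect:
  assumes "b \<noteq> 0"
  shows "reflect b (reflect b v) = v"
proof -
  have "reflect b v \<bullet> b = - (v \<bullet> b)"
    using assms by (simp add: reflect_def inner_diff_left)
  then show ?thesis
    by (simp add: reflect_def[of b "reflect b v"]) (simp add: reflect_def)
qed

lemma reflect_eq_self_iff: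
  assumes "b \<noteq> 0"
  shows "reflect b v = v \<longleftrightarrow> v \<bullet> b = 0"
  using assms by (simp add: reflect_def)

lemma linear_ht:
  assumes "independent S" "span S = UNIV"
  shows "linear (ht S b)"
  by (rule linearI)
    (simp_all add: assms ht_def real_vector.representation_add real_vector.representation_scale)

lemma root_system_uminus:
  assumes "root_system R" "x \<in> R"
  shows "- x \<in> R"
  using assms reflect_self[of x] unfolding root_system_def by metis

lemma root_system_inner_square_less:
  assumes R: "root_system R" and x: "x \<in> R" and y: "y \<in> R" and "y \<noteq> x" "y \<noteq> - x"
  shows "(x \<bullet> y)\<^sup>2 < (x \<bullet> x) * (y \<bullet> y)"
proof -
  have "\<bar>x \<bullet> y\<bar> \<noteq> norm x * norm y"
  proof
    assume "\<bar>x \<bullet> y\<bar> = norm x * norm y"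
    then obtain c where c: "y = c *\<^sub>R x"
      using R x y unfolding norm_cauchy_schwarz_equal collinear_lemma root_system_def by auto
    then have "c = 1 \<or> c = -1"
      using R x y unfolding root_system_def by auto
    then show False
      using c assms by auto
  qed
  then have "\<bar>x \<bullet> y\<bar> < norm x * norm y"
    using Cauchy_Schwarz_ineq2[of x y] by linarith
  then have "\<bar>x \<bullet> y\<bar>\<^sup>2 < (norm x * norm y)\<^sup>2"
    by (intro power_strict_mono) auto
  then show ?thesis
    by (simp add: power_mult_distrib power2_norm_eq_inner)
qed

lemma root_system_cartan_integer_eq_one:
  assumes R: "root_system R" and x: "x \<in> R" and y: "y \<in> R"
    and pos: "x \<bullet> y > 0" and "x \<noteq> y"
  shows "2 * (x \<bullet> y) / (y \<bullet> y) = 1 \<or> 2 * (x \<bullet> y) / (x \<bullet> x) = 1"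
proof -
  have xx: "x \<bullet> x > 0" and yy: "y \<bullet> y > 0"
    using R x y unfolding root_system_def by auto
  obtain m n :: int where m: "2 * (x \<bullet> y) / (y \<bullet> y) = m" and n: "2 * (x \<bullet> y) / (x \<bullet> x) = n"
    using R x y unfolding root_system_def by (metis Ints_cases inner_commute)
  have "m > 0" "n > 0"
    using m n pos xx yy by (metis divide_pos_pos mult_pos_pos of_int_0_less_iff zero_less_numeral)+
  have "y \<noteq> - x"
  proof
    assume "y = - x"
    then have "x \<bullet> y = - (x \<bullet> x)"
      by simp
    then show False
      using pos xx by linarith
  qed
  have "real_of_int (m * n) = 4 * (x \<bullet> y)\<^sup>2 / ((x \<bullet> x) * (y \<bullet> y))"
    unfolding of_int_mult m [symmetric] n [symmetric] by (simp add: power2_eq_square mult.commute)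
  also have "\<dots> < 4"
    using root_system_inner_square_less[OF R x y] \<open>x \<noteq> y\<close> \<open>y \<noteq> - x\<close> xx yy
    by (simp add: field_simps)
  finally have "m * n < 4"
    by linarith
  moreover have "m * n \<ge> 2 * 2" if "m \<ge> 2" "n \<ge> 2"
    using that by (intro mult_mono) auto
  ultimately have "m = 1 \<or> n = 1"
    using \<open>m > 0\<close> \<open>n > 0\<close> by linarith
  then show ?thesis
    using m n by auto
qed

lemma root_system_diff:
  assumes R: "root_system R" and x: "x \<in> R" and y: "y \<in> R"
    and pos: "x \<bullet> y > 0" and "x \<noteq> y"
  shows "x - y \<in> R"
  using root_system_cartan_integer_eq_one[OF assms]
proof
  assume "2 * (x \<bullet> y) / (y \<bullet> y) = 1"
  then have "reflect y x = x - y"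
    using pos by (simp add: reflect_def)
  then show ?thesis
    using R x y unfolding root_system_def by metis
next
  assume "2 * (x \<bullet> y) / (x \<bullet> x) = 1"
  then have "reflect x y = - (x - y)"
    using pos by (simp add: reflect_def inner_commute)
  then show ?thesis
    using R x y root_system_uminus unfolding root_system_def by (metis minus_minus)
qed

lemma root_system_add:
  assumes "root_system R" "x \<in> R" "y \<in> R" "x \<bullet> y < 0" "x \<noteq> - y"
  shows "x + y \<in> R"
  using root_system_diff[OF assms(1,2) root_system_uminus[OF assms(1,3)]] assms(4,5) by simp

locale based_root_system =
  fixes R S :: "'a::euclidean_space set"
  assumes root_system: "root_system R" and base: "is_base R S"
begin

lemma finite_roots: "finite R"
  and zero_not_root: "0 \<notin> R"
  and reflect_root: "a \<in> R \<Longrightarrow> b \<in> R \<Longrightarrow> reflect a b \<in> R"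
  using root_system unfolding root_system_def by auto

lemma simple_roots_subset: "S \<subseteq> R"
  and independent_simple_roots: "independent S"
  and ht_Ints: "g \<in> R \<Longrightarrow> b \<in> S \<Longrightarrow> ht S b g \<in> \<int>"
  and ht_sign: "g \<in> R \<Longrightarrow> (\<forall>b\<in>S. ht S b g \<ge> 0) \<or> (\<forall>b\<in>S. ht S b g \<le> 0)"
  using base unfolding is_base_def by auto

lemma span_simple_roots: "span S = UNIV"
proof -
  have "span R \<subseteq> span S"
    using base span_minimal[OF _ subspace_span] unfolding is_base_def by blast
  then show ?thesis
    using root_system unfolding root_system_def by auto
qed

lemma finite_simple_roots: "finite S"
  using independent_simple_roots independent_bound_general by blast

lemmas linear_ht_simple = linear_ht[OF independent_simple_roots span_simple_roots]
lemmas ht_add = linear_add[OF linear_ht_simple]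
  and ht_diff = linear_diff[OF linear_ht_simple]
  and ht_uminus = linear_neg[OF linear_ht_simple]
  and ht_zero = linear_0[OF linear_ht_simple]
  and ht_scaleR = linear_scale[OF linear_ht_simple]
  and ht_sum = linear_sum[OF linear_ht_simple]

lemma ht_simple_root: "c \<in> S \<Longrightarrow> ht S b c = (if b = c then 1 else 0)"
  unfolding ht_def using real_vector.representation_basis[OF independent_simple_roots] by auto

lemma inner_ht_expansion: "y \<bullet> x = (\<Sum>b\<in>S. ht S b x * (y \<bullet> b))"
proof -
  have "(\<Sum>b\<in>S. ht S b x *\<^sub>R b) = x"
    unfolding ht_def
    using real_vector.sum_representation_eq[OF independent_simple_roots, of x S]
      span_simple_roots finite_simple_roots by auto
  then show ?thesis
    using inner_sum_right[of y "\<lambda>b. ht S b x *\<^sub>R b" S] by simp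
qed

lemma mem_pos_roots_iff: "g \<in> pos_roots R S \<longleftrightarrow> g \<in> R \<and> (\<forall>b\<in>S. ht S b g \<ge> 0)"
  unfolding pos_roots_def by auto

lemma simple_root_pos: "b \<in> S \<Longrightarrow> b \<in> pos_roots R S"
  using simple_roots_subset by (auto simp: mem_pos_roots_iff ht_simple_root)

lemma pos_root_if_ht_pos: "g \<in> R \<Longrightarrow> b \<in> S \<Longrightarrow> ht S b g > 0 \<Longrightarrow> g \<in> pos_roots R S"
  using ht_sign[of g] by (force simp: mem_pos_roots_iff)

lemma pos_roots_add:
  "x \<in> pos_roots R S \<Longrightarrow> y \<in> pos_roots R S \<Longrightarrow> x + y \<in> R \<Longrightarrow> x + y \<in> pos_roots R S"
  by (auto simp: mem_pos_roots_iff ht_add)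

lemma pos_root_ne_uminus_simple: "g \<in> pos_roots R S \<Longrightarrow> b \<in> S \<Longrightarrow> g \<noteq> - b"
  by (force simp: mem_pos_roots_iff ht_uminus ht_simple_root)

lemma upper_ideal_add_simple:
  assumes J: "upper_ideal R S J" and "\<delta> \<in> J" and b: "b \<in> S" and "\<delta> \<bullet> b < 0"
  shows "\<delta> + b \<in> J"
proof -
  have \<delta>: "\<delta> \<in> pos_roots R S"
    using J \<open>\<delta> \<in> J\<close> unfolding upper_ideal_def by blast
  then have "\<delta> + b \<in> R"
    using root_system_add[OF root_system _ _ \<open>\<delta> \<bullet> b < 0\<close>] b simple_roots_subset
      pos_root_ne_uminus_simple by (auto simp: mem_pos_roots_iff)
  then have "b + \<delta> \<in> pos_roots R S"
    using pos_roots_add[OF \<delta> simple_root_pos[OF b]] by (simp add: add.commute)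
  then show ?thesis
    using J \<open>\<delta> \<in> J\<close> simple_root_pos[OF b] unfolding upper_ideal_def by (metis add.commute)
qed

lemma upper_ideal_ht_ge:
  assumes "a \<in> S" "c > 0"
  shows "upper_ideal R S {g \<in> R. c \<le> ht S a g}"
proof -
  have "{g \<in> R. c \<le> ht S a g} \<subseteq> pos_roots R S"
    using assms pos_root_if_ht_pos by force
  moreover have "c \<le> ht S a (v + g)" if "c \<le> ht S a g" "v \<in> pos_roots R S" for v g
    using that \<open>a \<in> S\<close> by (auto simp: mem_pos_roots_iff ht_add)
  ultimately show ?thesis
    by (auto simp: upper_ideal_def mem_pos_roots_iff)
qed

definition height :: "'a \<Rightarrow> real"
  where "height g = (\<Sum>b\<in>S. ht S b g)"

lemma height_add_simple: "b \<in> S \<Longrightarrow> height (g + b) = height g + 1"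
  using finite_simple_roots
  by (simp add: height_def ht_add sum.distrib ht_simple_root)

lemma upper_ideal_level_zero_dominant:
  assumes J: "upper_ideal R S J" and "x \<in> J" "ht S a x = 0"
  obtains \<delta> where "\<delta> \<in> J" "ht S a \<delta> = 0" "\<And>b. b \<in> S \<Longrightarrow> b \<noteq> a \<Longrightarrow> \<delta> \<bullet> b \<ge> 0"
proof -
  define X where "X = {g \<in> J. ht S a g = 0}"
  have "J \<subseteq> R"
    using J unfolding upper_ideal_def pos_roots_def by blast
  then have "finite X"
    unfolding X_def using finite_roots by (auto intro: finite_subset)
  moreover have "X \<noteq> {}"
    unfolding X_def using assms by auto
  ultimately have "Max (height ` X) \<in> height ` X"
    by (intro Max_in) auto
  then obtain \<delta> where "\<delta> \<in> X" and \<delta>_Max: "height \<delta> = Max (height ` X)"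
    by (metis imageE)
  have \<delta>_max: "height g \<le> height \<delta>" if "g \<in> X" for g
    unfolding \<delta>_Max using \<open>finite X\<close> that by simp
  have \<delta>: "\<delta> \<in> J" "ht S a \<delta> = 0"
    using \<open>\<delta> \<in> X\<close> unfolding X_def by auto
  have "\<delta> \<bullet> b \<ge> 0" if b: "b \<in> S" "b \<noteq> a" for b
  proof (rule ccontr)
    assume "\<not> \<delta> \<bullet> b \<ge> 0"
    then have "\<delta> + b \<in> J"
      using upper_ideal_add_simple[OF J \<delta>(1) b(1)] by simp
    moreover have "ht S a (\<delta> + b) = 0"
      using \<delta>(2) b by (simp add: ht_add ht_simple_root)
    ultimately have "height (\<delta> + b) \<le> height \<delta>"
      using \<delta>_max unfolding X_def by blast
    then show False
      using height_add_simple[OF b(1), of \<delta>] by simp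
  qed
  with \<delta> show ?thesis
    using that by blast
qed

definition level_sum :: "'a \<Rightarrow> real \<Rightarrow> 'a"
  where "level_sum a k = (\<Sum>v\<in>{v \<in> R. ht S a v = k}. v)"

lemma level_sum_inner_simple:
  assumes "a \<in> S" "b \<in> S" "b \<noteq> a"
  shows "level_sum a k \<bullet> b = 0"
proof -
  let ?L = "{v \<in> R. ht S a v = k}"
  have "b \<noteq> 0"
    using assms simple_roots_subset zero_not_root by auto
  have "ht S a (reflect b v) = ht S a v" for v
    using assms by (simp add: reflect_def ht_diff ht_scaleR ht_simple_root)
  then have "reflect b \<in> ?L \<rightarrow> ?L"
    using reflect_root assms simple_roots_subset by auto
  then have "bij_betw (reflect b) ?L ?L"
    by (intro bij_betwI) (auto simp: reflect_reflect[OF \<open>b \<noteq> 0\<close>])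
  then have "(\<Sum>v\<in>?L. reflect b v) = level_sum a k"
    unfolding level_sum_def by (rule sum.reindex_bij_betw)
  then have "reflect b (level_sum a k) = level_sum a k"
    unfolding level_sum_def by (simp add: linear_sum[OF linear_reflect])
  then show ?thesis
    using reflect_eq_self_iff[OF \<open>b \<noteq> 0\<close>] by blast
qed

lemma level_sum_inner:
  assumes "a \<in> S"
  shows "level_sum a k \<bullet> x = ht S a x * (level_sum a k \<bullet> a)"
proof -
  have off_a: "(\<Sum>b\<in>S - {a}. ht S b x * (level_sum a k \<bullet> b)) = 0"
    using assms by (intro sum.neutral) (simp add: level_sum_inner_simple)
  have "level_sum a k \<bullet> x = (\<Sum>b\<in>S. ht S b x * (level_sum a k \<bullet> b))"
    by (rule inner_ht_expansion)
  also have "\<dots> = ht S a x * (level_sum a k \<bullet> a)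
      + (\<Sum>b\<in>S - {a}. ht S b x * (level_sum a k \<bullet> b))"
    using finite_simple_roots assms by (rule sum.remove)
  finally show ?thesis
    using off_a by simp
qed

lemma level_sum_inner_pos:
  assumes a: "a \<in> S" and "v \<in> R" "ht S a v = k" "k > 0"
  shows "level_sum a k \<bullet> a > 0"
proof -
  let ?L = "{v \<in> R. ht S a v = k}"
  have "card ?L > 0"
    using assms finite_roots by (auto simp: card_gt_0_iff)
  have "ht S a (level_sum a k) = (\<Sum>v\<in>?L. ht S a v)"
    unfolding level_sum_def by (rule ht_sum)
  also have "\<dots> = (\<Sum>v\<in>?L. k)"
    by (rule sum.cong) auto
  also have "\<dots> = real (card ?L) * k"
    by simp
  finally have ht_pos: "ht S a (level_sum a k) > 0"
    using \<open>card ?L > 0\<close> \<open>k > 0\<close> by simp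
  then have "level_sum a k \<noteq> 0"
    by (metis ht_zero less_irrefl)
  then have "level_sum a k \<bullet> level_sum a k > 0"
    by simp
  with ht_pos show ?thesis
    by (simp add: level_sum_inner[OF a, of k "level_sum a k"] zero_less_mult_iff)
qed

lemma exists_root_at_level_inner_pos:
  assumes a: "a \<in> S" and "v \<in> R" "ht S a v = k" "k > 0" and "ht S a x > 0"
  shows "\<exists>w\<in>R. ht S a w = k \<and> w \<bullet> x > 0"
proof (rule ccontr)
  assume "\<not> ?thesis"
  then have "level_sum a k \<bullet> x \<le> 0"
    unfolding level_sum_def inner_sum_left by (intro sum_nonpos) auto
  moreover have "level_sum a k \<bullet> x > 0"
    unfolding level_sum_inner[OF a, of k x]
    using level_sum_inner_pos[OF assms(1-4)] \<open>ht S a x > 0\<close> by simp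
  ultimately show False
    by simp
qed

end

locale based_root_system_highest_root = based_root_system +
  fixes t :: 'a
  assumes highest_root: "highest_root R S t"
begin

lemma highest_root_mem: "t \<in> R"
  and ht_le_highest: "g \<in> R \<Longrightarrow> b \<in> S \<Longrightarrow> ht S b g \<le> ht S b t"
  using highest_root unfolding highest_root_def by auto

lemma highest_root_pos: "t \<in> pos_roots R S"
proof -
  have "ht S b t \<ge> 0" if "b \<in> S" for b
    using ht_le_highest[of b b] that simple_roots_subset ht_simple_root by force
  then show ?thesis
    using highest_root_mem by (simp add: mem_pos_roots_iff)
qed

lemma dominant_inner_highest_pos:
  assumes x: "x \<in> pos_roots R S" and dominant: "\<forall>b\<in>S. x \<bullet> b \<ge> 0"
  shows "x \<bullet> t > 0"
proof -
  have "x \<in> R"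
    using x by (simp add: mem_pos_roots_iff)
  then have "x \<bullet> x > 0"
    using zero_not_root by (metis inner_gt_zero_iff)
  moreover have "x \<bullet> (t - x) \<ge> 0"
    unfolding inner_ht_expansion[of x "t - x"]
    using dominant ht_le_highest[OF \<open>x \<in> R\<close>] by (intro sum_nonneg) (simp add: ht_diff)
  moreover have "x \<bullet> t = x \<bullet> x + x \<bullet> (t - x)"
    by (simp add: inner_diff_right)
  ultimately show ?thesis
    by linarith
qed

lemma abelian_ht_ge:
  assumes "a \<in> S" "ht S a t < 2 * c"
  shows "abelian_set R S {g \<in> R. c \<le> ht S a g}"
proof -
  have "g1 + g2 \<notin> pos_roots R S" if "c \<le> ht S a g1" "c \<le> ht S a g2" for g1 g2
  proof
    assume "g1 + g2 \<in> pos_roots R S"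
    then have "ht S a (g1 + g2) \<le> ht S a t"
      using ht_le_highest assms(1) by (simp add: mem_pos_roots_iff)
    then show False
      using that assms(2) by (simp add: ht_add)
  qed
  then show ?thesis
    unfolding abelian_set_def by blast
qed

end

locale abelian_ideal_above_half = based_root_system_highest_root +
  fixes a :: 'a and d :: nat and J :: "'a set"
  assumes simple: "a \<in> S" and ht_highest: "ht S a t = 2 * real d + 1"
    and upper_ideal: "upper_ideal R S J" and abelian: "abelian_set R S J"
    and upper_half_subset: "{g \<in> R. real d + 1 \<le> ht S a g} \<subseteq> J"
begin

lemma mem_pos: "x \<in> J \<Longrightarrow> x \<in> pos_roots R S"
  using upper_ideal unfolding upper_ideal_def by blast

lemma add_upper_half_not_pos:
  assumes "x \<in> J" "y \<in> R" "real d + 1 \<le> ht S a y"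
  shows "x + y \<notin> pos_roots R S"
proof -
  have "y \<in> J"
    using assms(2,3) upper_half_subset by blast
  then show ?thesis
    using abelian \<open>x \<in> J\<close> unfolding abelian_set_def by blast
qed

lemma ht_gt_if_pos:
  assumes x: "x \<in> J" and "ht S a x > 0"
  shows "ht S a x > real d"
proof (rule ccontr)
  assume low: "\<not> ht S a x > real d"
  have "\<exists>v\<in>R. ht S a v = ht S a t \<and> v \<bullet> x > 0"
    using exists_root_at_level_inner_pos[OF simple highest_root_mem refl _ \<open>ht S a x > 0\<close>]
      ht_highest by simp
  then obtain v where v: "v \<in> R" "ht S a v = ht S a t" and "v \<bullet> x > 0"
    by blast
  have "x \<in> R"
    using mem_pos[OF x] by (simp add: mem_pos_roots_iff)
  moreover have "v \<noteq> x"
    using v ht_highest low by auto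
  ultimately have "v - x \<in> R"
    using root_system_diff[OF root_system v(1)] \<open>v \<bullet> x > 0\<close> by (simp add: inner_commute)
  moreover have "real d + 1 \<le> ht S a (v - x)"
    using v ht_highest low by (simp add: ht_diff)
  ultimately have "x + (v - x) \<notin> pos_roots R S"
    by (rule add_upper_half_not_pos[OF x])
  moreover have "v \<in> pos_roots R S"
    using pos_root_if_ht_pos[OF v(1) simple] v ht_highest by simp
  ultimately show False
    by simp
qed

lemma ht_ne_zero:
  assumes "x \<in> J"
  shows "ht S a x \<noteq> 0"
proof
  assume "ht S a x = 0"
  then obtain \<delta> where \<delta>: "\<delta> \<in> J" "ht S a \<delta> = 0"
    and dominant_off_a: "\<And>b. b \<in> S \<Longrightarrow> b \<noteq> a \<Longrightarrow> \<delta> \<bullet> b \<ge> 0"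
    using upper_ideal_level_zero_dominant[OF upper_ideal assms] by blast
  show False
  proof (cases "\<delta> \<bullet> a \<ge> 0")
    case True
    then have "\<delta> \<bullet> t > 0"
      using dominant_off_a dominant_inner_highest_pos[OF mem_pos[OF \<delta>(1)]] by blast
    moreover have "\<delta> \<in> R" "t \<noteq> \<delta>"
      using mem_pos[OF \<delta>(1)] \<delta>(2) ht_highest by (auto simp: mem_pos_roots_iff)
    ultimately have "t - \<delta> \<in> R"
      using root_system_diff[OF root_system highest_root_mem] by (simp add: inner_commute)
    moreover have "real d + 1 \<le> ht S a (t - \<delta>)"
      using \<delta>(2) ht_highest by (simp add: ht_diff)
    ultimately have "\<delta> + (t - \<delta>) \<notin> pos_roots R S"
      by (rule add_upper_half_not_pos[OF \<delta>(1)])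
    then show False
      using highest_root_pos by simp
  next
    case False
    then have "\<delta> + a \<in> J"
      using upper_ideal_add_simple[OF upper_ideal \<delta>(1) simple] by simp
    moreover have "ht S a (\<delta> + a) = 1"
      using \<delta>(2) simple by (simp add: ht_add ht_simple_root)
    ultimately have "d = 0"
      using ht_gt_if_pos[of "\<delta> + a"] by simp
    moreover have "a \<in> R" "ht S a a = 1"
      using simple simple_roots_subset ht_simple_root by auto
    ultimately have "\<delta> + a \<notin> pos_roots R S"
      using add_upper_half_not_pos[OF \<delta>(1), of a] by simp
    then show False
      using mem_pos \<open>\<delta> + a \<in> J\<close> by blast
  qed
qed

lemma subset_upper_half: "J \<subseteq> {g \<in> R. real d + 1 \<le> ht S a g}"
proof
  fix g
  assume "g \<in> J"
  then have "g \<in> R" "ht S a g \<ge> 0"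
    using mem_pos simple by (auto simp: mem_pos_roots_iff)
  moreover have "ht S a g > real d"
    using ht_gt_if_pos[OF \<open>g \<in> J\<close>] ht_ne_zero[OF \<open>g \<in> J\<close>] \<open>ht S a g \<ge> 0\<close> by simp
  moreover obtain k :: int where "ht S a g = k"
    using ht_Ints[OF \<open>g \<in> R\<close> simple] Ints_cases by metis
  ultimately have "int d < k"
    by simp
  then show "g \<in> {g \<in> R. real d + 1 \<le> ht S a g}"
    using \<open>g \<in> R\<close> \<open>ht S a g = k\<close> by simp
qed

end

theorem proposition3p8:
  fixes R S :: "'a::euclidean_space set" and t a :: 'a and d :: nat
  assumes "root_system R" and "irreducible_rs R"
    and "is_base R S" and "highest_root R S t"
    and "a \<in> S" and "ht S a t = 2 * real d + 1"
  shows "maximal_abelian_ideal R S {g \<in> R. ht S a g \<ge> real d + 1}"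
proof -
  let ?I = "{g \<in> R. ht S a g \<ge> real d + 1}"
  interpret based_root_system_highest_root R S t
    using assms by unfold_locales
  have "upper_ideal R S ?I"
    using upper_ideal_ht_ge assms(5) by simp
  moreover have "abelian_set R S ?I"
    using abelian_ht_ge assms(5,6) by simp
  moreover have "\<forall>J. upper_ideal R S J \<and> abelian_set R S J \<and> ?I \<subseteq> J \<longrightarrow> J = ?I"
  proof (intro allI impI)
    fix J
    assume "upper_ideal R S J \<and> abelian_set R S J \<and> ?I \<subseteq> J"
    then interpret abelian_ideal_above_half R S t a d J
      using assms by unfold_locales auto
    show "J = ?I"
      using subset_upper_half upper_half_subset by blast
  qed
  ultimately show ?thesis
    unfolding maximal_abelian_ideal_def by (intro conjI)
qed

end
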